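(* Let $\lambda\in\mathbb{C}$, fix $a,b\in\mathbb{C}$ with $a^2=-\lambda$ and $b^2=1-\lambda$ (i.e. $a=(-\lambda)^{1/2}$, $b=(1-\lambda)^{1/2}$), and let $\phi:\mathbb{Z}^2\to\mathbb{C}$ be a (generic, nonvanishing) solution of \[ \frac{\widetilde{\overline\phi}}{\phi}=\frac{b\,\overline\phi-a\,\widetilde\phi}{b\,\widetilde\phi-a\,\overline\phi}. \] Then \[ u=\frac{a\,\overline\phi-b\,\widetilde\phi}{\phi},\qquad v=a\,\frac{\overline\phi}{\phi} \] satisfy respectively the dKdV equation $\widetilde{\overline u}-u=\frac1{\widetilde u}-\frac1{\overline u}$ and the equation \[ \big(v\,\overline v-\widetilde v\,\widetilde{\overline v}\big)^2+\big(v-\widetilde{\overline v}\big)\big(\overline v-\widetilde v\big)\big(\lambda-v\,\overline v\big)\big(\lambda-\widetilde v\,\widetilde{\overline v}\big)=0. \]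
   Context: Shift notation: for $f:\mathbb{Z}^2\to\mathbb{C}$, $f=f_{l,m}$, $\overline f=f_{l+1,m}$, $\widetilde f=f_{l,m+1}$, $\widetilde{\overline f}=f_{l+1,m+1}$. *)

theory Defs
  imports "HOL-Analysis.Analysis"
begin

end

theory Submission
  imports Defs
begin

text \<open>
  After clearing denominators, both equations become polynomial identities in finitely many
  values of \<open>\<phi>\<close>. Written polynomially, the lattice equation on each elementary quad says
  \<open>\<phi>\<^sub>1\<^sub>2 (b \<phi>\<^sub>2 - a \<phi>\<^sub>1) = \<phi> (b \<phi>\<^sub>1 - a \<phi>\<^sub>2)\<close>, and each target identity lies in the ideal
  generated by these quad relations (three quads around a vertex for dKdV, two adjacent quads
  for the equation in \<open>v\<close>) together with \<open>a\<^sup>2 = -\<lambda>\<close> and \<open>b\<^sup>2 = 1 - \<lambda>\<close>; the Groebner basis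
  method \<open>algebra\<close> certifies the membership.
\<close>

definition quad_relation ::
    "complex \<Rightarrow> complex \<Rightarrow> complex \<Rightarrow> complex \<Rightarrow> complex \<Rightarrow> complex \<Rightarrow> bool" where
  "quad_relation a b p00 p10 p01 p11 \<longleftrightarrow> p11 * (b * p01 - a * p10) = p00 * (b * p10 - a * p01)"

lemma quad_relationI:
  assumes "p00 \<noteq> 0" "b * p01 - a * p10 \<noteq> 0"
    and "p11 / p00 = (b * p10 - a * p01) / (b * p01 - a * p10)"
  shows "quad_relation a b p00 p10 p01 p11"
  using assms unfolding quad_relation_def by (simp add: frac_eq_eq mult.commute)

lemma dKdV_from_quad_relations:
  fixes lam a b p00 p10 p01 p11 p20 p02 p21 p12 :: complex
  assumes "a\<^sup>2 = - lam" "b\<^sup>2 = 1 - lam"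
    and "p00 \<noteq> 0" "p11 \<noteq> 0" "a * p11 - b * p02 \<noteq> 0" "a * p20 - b * p11 \<noteq> 0"
    and "quad_relation a b p00 p10 p01 p11"
      "quad_relation a b p10 p20 p11 p21" "quad_relation a b p01 p11 p02 p12"
  shows "(a * p21 - b * p12) / p11 - (a * p10 - b * p01) / p00
       = p01 / (a * p11 - b * p02) - p10 / (a * p20 - b * p11)"
  using assms unfolding quad_relation_def
  by (simp add: diff_frac_eq frac_eq_eq) algebra

lemma v_equation_from_quad_relations:
  fixes lam a b p00 p10 p01 p11 p20 p21 v00 v10 v01 v11 :: complex
  assumes "a\<^sup>2 = - lam" "b\<^sup>2 = 1 - lam"
    and "p00 \<noteq> 0" "p10 \<noteq> 0" "p01 \<noteq> 0"
    and "quad_relation a b p00 p10 p01 p11" "quad_relation a b p10 p20 p11 p21"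
    and "v00 * p00 = a * p10" "v10 * p10 = a * p20" "v01 * p01 = a * p11" "v11 * p11 = a * p21"
  shows "(v00 * v10 - v01 * v11)\<^sup>2
       + (v00 - v11) * (v10 - v01) * (lam - v00 * v10) * (lam - v01 * v11) = 0"
  using assms unfolding quad_relation_def by algebra

theorem mainTheorem5:
  fixes lam a b :: complex and phi :: "int \<Rightarrow> int \<Rightarrow> complex"
    and u v :: "int \<Rightarrow> int \<Rightarrow> complex"
  assumes ha: "a\<^sup>2 = - lam" and hb: "b\<^sup>2 = 1 - lam"
    and nz: "\<And>l m. phi l m \<noteq> 0"
    and gen1: "\<And>l m. b * phi l (m+1) - a * phi (l+1) m \<noteq> 0"
    and gen2: "\<And>l m. a * phi (l+1) m - b * phi l (m+1) \<noteq> 0"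
    and eq: "\<And>l m. phi (l+1) (m+1) / phi l m
               = (b * phi (l+1) m - a * phi l (m+1)) / (b * phi l (m+1) - a * phi (l+1) m)"
  defines "u \<equiv> \<lambda>l m. (a * phi (l+1) m - b * phi l (m+1)) / phi l m"
    and "v \<equiv> \<lambda>l m. a * phi (l+1) m / phi l m"
  shows "(\<forall>l m. u (l+1) (m+1) - u l m = 1 / u l (m+1) - 1 / u (l+1) m)
       \<and> (\<forall>l m. (v l m * v (l+1) m - v l (m+1) * v (l+1) (m+1))\<^sup>2
                 + (v l m - v (l+1) (m+1)) * (v (l+1) m - v l (m+1))
                   * (lam - v l m * v (l+1) m) * (lam - v l (m+1) * v (l+1) (m+1)) = 0)"
proof (intro conjI allI)
  have quad: "quad_relation a b (phi l m) (phi (l+1) m) (phi l (m+1)) (phi (l+1) (m+1))" for l m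
    using nz gen1 eq by (rule quad_relationI)
  fix l m
  show "u (l+1) (m+1) - u l m = 1 / u l (m+1) - 1 / u (l+1) m"
    using dKdV_from_quad_relations[OF ha hb nz nz gen2 gen2 quad quad quad]
    by (simp add: u_def add.assoc)
  show "(v l m * v (l+1) m - v l (m+1) * v (l+1) (m+1))\<^sup>2
      + (v l m - v (l+1) (m+1)) * (v (l+1) m - v l (m+1))
        * (lam - v l m * v (l+1) m) * (lam - v l (m+1) * v (l+1) (m+1)) = 0"
    by (rule v_equation_from_quad_relations[OF ha hb nz nz nz quad[of l m] quad[of "l+1" m]])
      (use nz in \<open>simp_all add: v_def\<close>)
qed

end
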